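(* Fix $d \geq 1$ and $\alpha < 1/d$, and let $k,\ell \ge 0$ be integers. If $k+\ell = 2d+1$, then with overwhelming probability a graph $H \sim H\big(n-(2d+1),\ n^{-k\alpha}(1-n^{-\alpha})^{\ell},\ n^{-\ell\alpha}(1-n^{-\alpha})^{k},\ n^{-\alpha}\big)$ is nonempty. If $k+\ell = 2d$, then with overwhelming probability $H \sim H\big(n-2d,\ n^{-k\alpha}(1-n^{-\alpha})^{\ell},\ n^{-\ell\alpha}(1-n^{-\alpha})^{k},\ n^{-\alpha}\big)$ is connected.
   Context: For $N \in \mathbb{N}$ and probabilities $p_A,p_B,p_{eA},p_{eB},p_{eAB}$ (with $p_A+p_B\le 1$), $H(N,p_A,p_B,p_{eA},p_{eB},p_{eAB})$ is the random graph obtained as follows: each element of $[N]$ independently is put in $A$ with probability $p_A$, in $B$ with probability $p_B$, or discarded with probability $1-p_A-p_B$; the vertex set is $A \cup B$; each pair inside $A$ is an edge independently with probability $p_{eA}$, each pair inside $B$ with probability $p_{eB}$, and each pair with one endpoint in $A$ and one in $B$ with probability $p_{eAB}$. The shorthand $H(N,p_A,p_B,q)$ means $H(N,p_A,p_B,q,q,1-q)$. "With overwhelming probability" means with probability at least $1 - n^{-\omega(1)}$ as $n\to\infty$. *)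

theory Defs
  imports "HOL-Probability.Probability"
begin

text \<open>Labels of the elements of [N] = {0..<N}: Some True = put in A,
  Some False = put in B, None = discarded.\<close>
definition label_pmf :: "real \<Rightarrow> real \<Rightarrow> bool option pmf" where
  "label_pmf pA pB = embed_pmf (\<lambda>x. case x of Some True \<Rightarrow> pA | Some False \<Rightarrow> pB | None \<Rightarrow> 1 - pA - pB)"

definition edge_prob :: "real \<Rightarrow> real \<Rightarrow> real \<Rightarrow> bool option \<Rightarrow> bool option \<Rightarrow> real" where
  "edge_prob peA peB peAB a b =
     (case (a, b) of (Some True, Some True) \<Rightarrow> peA
                   | (Some False, Some False) \<Rightarrow> peB
                   | (Some _, Some _) \<Rightarrow> peAB
                   | _ \<Rightarrow> 0)"

text \<open>A graph is a pair (V, E): vertex set V and edge set E of pairs (i,j) with i < j.\<close>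
type_synonym graph = "nat set \<times> (nat \<times> nat) set"

definition H :: "nat \<Rightarrow> real \<Rightarrow> real \<Rightarrow> real \<Rightarrow> real \<Rightarrow> real \<Rightarrow> graph pmf" where
  "H N pA pB peA peB peAB =
     do {
       lab \<leftarrow> Pi_pmf {..<N} None (\<lambda>_. label_pmf pA pB);
       coin \<leftarrow> Pi_pmf {(i, j). i < j \<and> j < N} False
                 (\<lambda>(i, j). bernoulli_pmf (edge_prob peA peB peAB (lab i) (lab j)));
       return_pmf ({i. i < N \<and> lab i \<noteq> None},
                   {(i, j). i < j \<and> j < N \<and> lab i \<noteq> None \<and> lab j \<noteq> None \<and> coin (i, j)})
     }"

definition Hq :: "nat \<Rightarrow> real \<Rightarrow> real \<Rightarrow> real \<Rightarrow> graph pmf" where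
  "Hq N pA pB q = H N pA pB q q (1 - q)"

definition graph_nonempty :: "graph \<Rightarrow> bool" where
  "graph_nonempty G \<longleftrightarrow> fst G \<noteq> {}"

definition graph_connected :: "graph \<Rightarrow> bool" where
  "graph_connected G \<longleftrightarrow> fst G \<noteq> {} \<and>
     (\<forall>u\<in>fst G. \<forall>v\<in>fst G. (u, v) \<in> (snd G \<union> (snd G)\<inverse>)\<^sup>*)"

text \<open>A family of events (indexed by n) holds with overwhelming probability if its
  probability is at least 1 - n^(-omega(1)), i.e. for every C > 0 it is eventually
  at least 1 - n^(-C).\<close>
definition overwhelming :: "(nat \<Rightarrow> real) \<Rightarrow> bool" where
  "overwhelming P \<longleftrightarrow> (\<forall>C>0. \<forall>\<^sub>F n in sequentially. P n \<ge> 1 - real n powr (- C))"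

end

theory Submission
  imports Defs "HOL-Real_Asymp.Real_Asymp"
begin

(* Sample the labels first and the edges second. Given the labels the edges are independent,
   so the probability that a prescribed set of pairs carries no edge is a product, and a union
   bound over cuts controls disconnection.

   A class whose label has probability at least n^(e-1) has at least n^g members for any
   g < e, except with probability (N choose n^g) (1 - n^(e-1))^(N - n^g), which is
   superpolynomially small. If a class X has m members with q m >= n^c for some c > 0, where
   q = n^(-alpha), then every balanced cut of X is crossed by an edge inside X, and every vertex
   outside X (edges to X have probability 1 - q) has a neighbour in X. If both classes have
   n^g members, every vertex of A is adjacent to more than half of B, so any two vertices of A
   have a common neighbour, and every vertex of B has a neighbour in A.

   The label probabilities are n^(-k alpha) and n^(-l alpha) up to constant factors. For
   k + l = 2d + 1 one of k, l is at most d, so some class is nonempty. For k + l = 2d either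
   k = l = d and both classes have about n^(1 - d alpha) members, or the smaller of k, l is at
   most d - 1 and its class has about n^(1 - (d - 1) alpha) members, far more than 1/q. *)

lemma pmf_label_pmf:
  assumes "0 \<le> pA" "0 \<le> pB" "pA + pB \<le> 1"
  shows "pmf (label_pmf pA pB) None = 1 - pA - pB"
    and "pmf (label_pmf pA pB) (Some True) = pA"
    and "pmf (label_pmf pA pB) (Some False) = pB"
proof -
  have "pmf (label_pmf pA pB) y
      = (case y of Some True \<Rightarrow> pA | Some False \<Rightarrow> pB | None \<Rightarrow> 1 - pA - pB)" for y
    unfolding label_pmf_def
  proof (rule pmf_embed_pmf)
    have univ: "(UNIV :: bool option set) = {None, Some True, Some False}"
      by (auto simp: UNIV_option_conv)
    show "(\<integral>\<^sup>+ x. ennreal (case x of Some True \<Rightarrow> pA | Some False \<Rightarrow> pB | None \<Rightarrow> 1 - pA - pB)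
        \<partial>count_space UNIV) = 1"
      using assms by (simp add: univ nn_integral_count_space_finite ennreal_plus[symmetric] del: ennreal_plus)
  qed (use assms in \<open>auto split: option.split bool.split\<close>)
  then show "pmf (label_pmf pA pB) None = 1 - pA - pB"
    and "pmf (label_pmf pA pB) (Some True) = pA"
    and "pmf (label_pmf pA pB) (Some False) = pB"
    by simp_all
qed

lemma pmf_add_pmf_le_1:
  assumes "a \<noteq> b"
  shows "pmf M a + pmf M b \<le> 1"
proof -
  have "pmf M a + pmf M b = measure_pmf.prob M {a, b}"
    using assms by (simp add: measure_measure_pmf_finite)
  then show ?thesis by simp
qed

lemma measure_pmf_prob_not:
  "measure_pmf.prob M {x. P x} = 1 - measure_pmf.prob M {x. \<not> P x}"
proof -
  have "{x. P x} = space (measure_pmf M) - {x. \<not> P x}" by auto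
  then show ?thesis using measure_pmf.prob_compl[of "{x. \<not> P x}" M] by simp
qed

lemma measure_pmf_prob_le_Un:
  assumes "A \<subseteq> B \<union> C"
  shows "measure_pmf.prob M A \<le> measure_pmf.prob M B + measure_pmf.prob M C"
proof -
  have "measure_pmf.prob M A \<le> measure_pmf.prob M (B \<union> C)"
    using assms by (intro measure_pmf.finite_measure_mono) auto
  also have "\<dots> \<le> measure_pmf.prob M B + measure_pmf.prob M C"
    by (rule measure_Un_le) auto
  finally show ?thesis .
qed

lemma measure_Pi_pmf_all_in:
  assumes "finite A" "T \<subseteq> A"
  shows "measure_pmf.prob (Pi_pmf A d p) {f. \<forall>i\<in>T. f i \<in> B i} = (\<Prod>i\<in>T. measure_pmf.prob (p i) (B i))"
proof -
  have "{f. \<forall>i\<in>T. f i \<in> B i} = Pi A (\<lambda>i. if i \<in> T then B i else UNIV)"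
    using assms by (auto simp: Pi_def)
  then have "measure_pmf.prob (Pi_pmf A d p) {f. \<forall>i\<in>T. f i \<in> B i}
      = (\<Prod>i\<in>A. measure_pmf.prob (p i) (if i \<in> T then B i else UNIV))"
    using assms by (simp add: measure_Pi_pmf_Pi)
  also have "\<dots> = (\<Prod>i\<in>T. measure_pmf.prob (p i) (B i))"
    using assms by (intro prod.mono_neutral_cong_right) auto
  finally show ?thesis .
qed

lemma measure_bind_pmf_le:
  assumes "\<And>x. x \<in> set_pmf M \<Longrightarrow> x \<notin> Bad \<Longrightarrow> measure_pmf.prob (f x) X \<le> e" and "0 \<le> e"
  shows "measure_pmf.prob (bind_pmf M f) X \<le> measure_pmf.prob M Bad + e"
proof -
  have "emeasure (measure_pmf (bind_pmf M f)) X = (\<integral>\<^sup>+x. emeasure (measure_pmf (f x)) X \<partial>M)"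
    by simp
  also have "\<dots> \<le> (\<integral>\<^sup>+x. (indicator Bad x + ennreal e) \<partial>M)"
  proof (rule nn_integral_mono_AE, unfold AE_measure_pmf_iff, intro ballI)
    fix x assume x: "x \<in> set_pmf M"
    show "emeasure (measure_pmf (f x)) X \<le> indicator Bad x + ennreal e"
    proof (cases "x \<in> Bad")
      case True
      then show ?thesis
        using measure_pmf.emeasure_le_1[of "f x" X] by (simp add: order_trans[OF _ add_increasing2])
    next
      case False
      then show ?thesis
        using assms(1)[OF x False] by (simp add: measure_pmf.emeasure_eq_measure ennreal_leI)
    qed
  qed
  also have "\<dots> = emeasure (measure_pmf M) Bad + ennreal e"
    by (subst nn_integral_add) (auto simp: measure_pmf.emeasure_space_1)
  finally show ?thesis
    using assms(2)
    by (simp add: measure_pmf.emeasure_eq_measure ennreal_plus[symmetric] del: ennreal_plus)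
qed

lemma one_minus_power_le_exp:
  fixes p :: real
  assumes "p \<le> 1"
  shows "(1 - p) ^ k \<le> exp (- p * real k)"
proof -
  have "(1 - p) ^ k \<le> exp (- p) ^ k"
    using assms exp_ge_add_one_self[of "- p"] by (intro power_mono) auto
  then show ?thesis
    by (simp add: exp_of_nat_mult[symmetric] mult.commute)
qed

lemma binomial_times_power_le_exp:
  fixes p :: real
  assumes "m \<le> N" "0 \<le> p" "p \<le> 1"
  shows "real (N choose m) * (1 - p) ^ (N - m) \<le> real N ^ m * exp (- p * real (N - m))"
proof (rule mult_mono)
  show "real (N choose m) \<le> real N ^ m"
    using binomial_le_pow[OF assms(1)] by (metis of_nat_le_iff of_nat_power)
qed (use assms one_minus_power_le_exp[of p "N - m"] in auto)

lemma binomial_tail_le_exp: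
  fixes n N m :: nat and p g e :: real
  assumes n: "1 \<le> n" "N \<le> n" and m: "real m \<le> real n powr g + 1" "real n / 4 \<le> real N - real m"
    and p: "real n powr (e - 1) / 2 \<le> p" "p \<le> 1"
  shows "real (N choose m) * (1 - p) ^ (N - m) \<le> exp ((real n powr g + 1) * ln (real n) - real n powr e / 8)"
proof -
  have "0 \<le> real n / 4" "0 \<le> real n powr (e - 1) / 2" by simp_all
  then have "m \<le> N" "0 \<le> p" using m(2) p(1) by linarith+
  have "real (N choose m) * (1 - p) ^ (N - m) \<le> real N ^ m * exp (- p * real (N - m))"
    by (rule binomial_times_power_le_exp) fact+
  also have "\<dots> \<le> real n ^ m * exp (- (real n powr (e - 1) / 2) * (real n / 4))"
  proof (rule mult_mono)
    have "real n powr (e - 1) / 2 * (real n / 4) \<le> p * real (N - m)"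
      using m(2) p \<open>m \<le> N\<close> \<open>0 \<le> p\<close> by (intro mult_mono) (auto simp: of_nat_diff)
    then show "exp (- p * real (N - m)) \<le> exp (- (real n powr (e - 1) / 2) * (real n / 4))"
      by simp
  qed (use n in \<open>auto intro: power_mono\<close>)
  also have "\<dots> = exp (real m * ln (real n) - real n powr e / 8)"
  proof -
    have "real n powr (e - 1) * real n = real n powr e"
      using powr_add[of "real n" "e - 1" 1] by simp
    then have "- (real n powr (e - 1) / 2) * (real n / 4) = - (real n powr e / 8)"
      by simp
    moreover have "real n ^ m = exp (real m * ln (real n))"
      using n by (simp add: exp_of_nat_mult)
    ultimately show ?thesis by (simp add: mult_exp_exp)
  qed
  also have "\<dots> \<le> exp ((real n powr g + 1) * ln (real n) - real n powr e / 8)"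
    using m(1) n by (simp add: mult_right_mono)
  finally show ?thesis .
qed

lemma sum_power_card_Pow:
  fixes y :: "'a :: comm_semiring_1"
  assumes "finite X"
  shows "(\<Sum>S\<in>Pow X. y ^ card S) = (1 + y) ^ card X"
  using prod_add[OF assms, of "\<lambda>_. y" "\<lambda>_. 1"] by (simp add: add.commute)

lemma real_nat_ceiling_le: "0 \<le> x \<Longrightarrow> real (nat \<lceil>x\<rceil>) \<le> x + 1"
  using ceiling_correct[of x] by simp

lemma
  fixes q :: real
  assumes "0 \<le> q" "q \<le> 1/4"
  shows two_sqrt_le_1: "2 * sqrt q \<le> 1" and le_two_sqrt: "q \<le> 2 * sqrt q"
proof -
  show "2 * sqrt q \<le> 1"
    using assms real_sqrt_le_mono[of q "1/4"] by (simp add: real_sqrt_divide)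
  then have "sqrt q * sqrt q \<le> 2 * sqrt q"
    using assms by (intro mult_right_mono) auto
  then show "q \<le> 2 * sqrt q"
    using assms by simp
qed

lemma power_times_one_minus_power_sum_le_1:
  fixes y :: real
  assumes "0 \<le> y" "y \<le> 1" "1 \<le> k"
  shows "y ^ k * (1 - y) ^ l + y ^ l * (1 - y) ^ k \<le> 1"
proof -
  have "y ^ k * (1 - y) ^ l \<le> y ^ k"
    using assms by (intro mult_left_le power_le_one) auto
  also have "\<dots> \<le> y"
    using power_decreasing[of 1 k y] assms by simp
  finally have "y ^ k * (1 - y) ^ l \<le> y" .
  moreover have "y ^ l * (1 - y) ^ k \<le> (1 - y) ^ k"
    using assms by (intro mult_left_le_one_le power_le_one) auto
  moreover have "(1 - y) ^ k \<le> 1 - y"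
    using power_decreasing[of 1 k "1 - y"] assms by simp
  ultimately show ?thesis by linarith
qed

section \<open>Connectivity criteria\<close>

definition adjacency :: "graph \<Rightarrow> (nat \<times> nat) set" where
  "adjacency G = snd G \<union> (snd G)\<inverse>"

lemma sym_adjacency: "sym (adjacency G)"
  by (auto simp: adjacency_def sym_def)

lemma graph_connected_if_hub:
  assumes "u \<in> fst G" and "\<And>v. v \<in> fst G \<Longrightarrow> (u, v) \<in> (adjacency G)\<^sup>*"
  shows "graph_connected G"
  unfolding graph_connected_def
proof (intro conjI ballI)
  show "fst G \<noteq> {}" using assms(1) by auto
  fix v w assume "v \<in> fst G" "w \<in> fst G"
  then have "(v, u) \<in> (adjacency G)\<^sup>*" "(u, w) \<in> (adjacency G)\<^sup>*"
    using assms(2) sym_adjacency by (metis rtrancl_converseI sym_conv_converse_eq)+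
  then show "(v, w) \<in> (snd G \<union> (snd G)\<inverse>)\<^sup>*"
    unfolding adjacency_def by (rule rtrancl_trans)
qed

lemma reach_all_if_balanced_cuts_crossed:
  assumes X: "finite X" "u \<in> X" and "sym R"
    and cuts: "\<And>S. S \<subseteq> X \<Longrightarrow> S \<noteq> {} \<Longrightarrow> 2 * card S \<le> card X \<Longrightarrow> \<exists>i\<in>S. \<exists>j\<in>X - S. (i, j) \<in> R"
  shows "\<forall>v\<in>X. (u, v) \<in> R\<^sup>*"
proof (rule ccontr)
  define C where "C = {v\<in>X. (u, v) \<in> R\<^sup>*}"
  have escape: False if S: "S \<subseteq> X" "S \<noteq> {}" "2 * card S \<le> card X" "S = C \<or> S = X - C" for S
  proof -
    obtain i j where "i \<in> S" "j \<in> X - S" "(i, j) \<in> R" "(j, i) \<in> R"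
      using cuts[OF S(1-3)] \<open>sym R\<close> by (auto dest: symD)
    then show False using S(4) by (auto simp: C_def intro: rtrancl_into_rtrancl)
  qed
  assume "\<not> (\<forall>v\<in>X. (u, v) \<in> R\<^sup>*)"
  then have "X - C \<noteq> {}" by (auto simp: C_def)
  moreover have "C \<noteq> {}" "C \<subseteq> X" using X by (auto simp: C_def)
  moreover have "card C + card (X - C) = card X"
    using X(1) by (simp add: C_def card_Diff_subset card_mono finite_subset)
  ultimately consider "2 * card C \<le> card X" | "2 * card (X - C) \<le> card X"
    by linarith
  then show False
    by cases (use escape[of C] escape[of "X - C"] \<open>C \<noteq> {}\<close> \<open>C \<subseteq> X\<close> \<open>X - C \<noteq> {}\<close> in auto)
qed

lemma graph_connected_if_class_cuts_crossed:
  assumes X: "finite X" "X \<subseteq> fst G" "X \<noteq> {}"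
    and cuts: "\<And>S. S \<subseteq> X \<Longrightarrow> S \<noteq> {} \<Longrightarrow> 2 * card S \<le> card X \<Longrightarrow>
                 \<exists>i\<in>S. \<exists>j\<in>X - S. (i, j) \<in> adjacency G"
    and attached: "\<And>v. v \<in> fst G - X \<Longrightarrow> \<exists>j\<in>X. (v, j) \<in> adjacency G"
  shows "graph_connected G"
proof -
  obtain u where u: "u \<in> X" using X by blast
  have reach: "\<forall>v\<in>X. (u, v) \<in> (adjacency G)\<^sup>*"
    by (rule reach_all_if_balanced_cuts_crossed[OF X(1) u sym_adjacency cuts])
  show ?thesis
  proof (rule graph_connected_if_hub)
    show "u \<in> fst G" using u X by auto
  next
    fix v assume v: "v \<in> fst G"
    show "(u, v) \<in> (adjacency G)\<^sup>*"
    proof (cases "v \<in> X")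
      case False
      then obtain j where "j \<in> X" "(v, j) \<in> adjacency G" using attached v by blast
      then show ?thesis using reach sym_adjacency by (meson rtrancl_into_rtrancl symD)
    qed (use reach in blast)
  qed
qed

lemma graph_connected_if_majority_adjacent:
  assumes A: "A \<noteq> {}" "A \<subseteq> fst G" and "finite B"
    and majority: "\<And>a. a \<in> A \<Longrightarrow> 2 * card {b\<in>B. (a, b) \<notin> adjacency G} < card B"
    and attached: "\<And>v. v \<in> fst G - A \<Longrightarrow> \<exists>a\<in>A. (v, a) \<in> adjacency G"
  shows "graph_connected G"
proof -
  obtain u where u: "u \<in> A" using A by blast
  have reach: "(u, a) \<in> (adjacency G)\<^sup>*" if a: "a \<in> A" for a
  proof -
    let ?far = "\<lambda>a. {b\<in>B. (a, b) \<notin> adjacency G}"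
    have "card (?far u \<union> ?far a) < card B"
      using card_Un_le[of "?far u" "?far a"] majority[OF u] majority[OF a] by linarith
    then have "?far u \<union> ?far a \<noteq> B" by auto
    then obtain b where "(u, b) \<in> adjacency G" "(a, b) \<in> adjacency G" by blast
    then show ?thesis using sym_adjacency by (meson r_into_rtrancl rtrancl_into_rtrancl symD)
  qed
  show ?thesis
  proof (rule graph_connected_if_hub)
    show "u \<in> fst G" using u A by auto
  next
    fix v assume v: "v \<in> fst G"
    show "(u, v) \<in> (adjacency G)\<^sup>*"
    proof (cases "v \<in> A")
      case False
      then obtain a where "a \<in> A" "(v, a) \<in> adjacency G" using attached v by blast
      then show ?thesis using reach sym_adjacency by (meson rtrancl_into_rtrancl symD)
    qed (use reach in blast)
  qed
qed

section \<open>The random graph conditioned on its labels\<close>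

definition labels_pmf :: "nat \<Rightarrow> real \<Rightarrow> real \<Rightarrow> (nat \<Rightarrow> bool option) pmf" where
  "labels_pmf N pA pB = Pi_pmf {..<N} None (\<lambda>_. label_pmf pA pB)"

definition coins_pmf :: "nat \<Rightarrow> real \<Rightarrow> (nat \<Rightarrow> bool option) \<Rightarrow> (nat \<times> nat \<Rightarrow> bool) pmf" where
  "coins_pmf N q lab = Pi_pmf {(i, j). i < j \<and> j < N} False
     (\<lambda>(i, j). bernoulli_pmf (edge_prob q q (1 - q) (lab i) (lab j)))"

definition graph_of :: "nat \<Rightarrow> (nat \<Rightarrow> bool option) \<Rightarrow> (nat \<times> nat \<Rightarrow> bool) \<Rightarrow> graph" where
  "graph_of N lab coin = ({i. i < N \<and> lab i \<noteq> None},
     {(i, j). i < j \<and> j < N \<and> lab i \<noteq> None \<and> lab j \<noteq> None \<and> coin (i, j)})"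

lemma vertices_graph_of [simp]: "fst (graph_of N lab coin) = {i. i < N \<and> lab i \<noteq> None}"
  by (simp add: graph_of_def)

lemma adjacency_graph_of:
  assumes "i \<in> fst (graph_of N lab coin)" "j \<in> fst (graph_of N lab coin)" "i \<noteq> j"
    and "coin (min i j, max i j)"
  shows "(i, j) \<in> adjacency (graph_of N lab coin)"
  using assms by (cases "i < j") (auto simp: graph_of_def adjacency_def min_def max_def)

lemma prob_Hq_le:
  assumes "\<And>lab. lab \<notin> Bad \<Longrightarrow> measure_pmf.prob (coins_pmf N q lab) {c. graph_of N lab c \<in> X} \<le> e"
    and "0 \<le> e"
  shows "measure_pmf.prob (Hq N pA pB q) X \<le> measure_pmf.prob (labels_pmf N pA pB) Bad + e"
proof -
  have "Hq N pA pB q = labels_pmf N pA pB \<bind> (\<lambda>lab. map_pmf (graph_of N lab) (coins_pmf N q lab))"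
    unfolding Hq_def H_def labels_pmf_def coins_pmf_def graph_of_def map_pmf_def by simp
  then show ?thesis
    using assms by (auto intro: measure_bind_pmf_le simp: vimage_def)
qed

lemma edge_prob_bounds:
  assumes "0 \<le> q" "q \<le> 1"
  shows "0 \<le> edge_prob q q (1 - q) a b" "edge_prob q q (1 - q) a b \<le> 1"
  using assms unfolding edge_prob_def by (auto split: option.split bool.split)

(* The coin of the pair {i, j} sits at index (min i j, max i j). *)
definition no_edge_between :: "nat set \<Rightarrow> nat set \<Rightarrow> (nat \<times> nat \<Rightarrow> bool) set" where
  "no_edge_between S T = {c. \<forall>i\<in>S. \<forall>j\<in>T. \<not> c (min i j, max i j)}"

lemma prob_no_edge_between_le:
  assumes S: "S \<subseteq> {..<N}" and T: "T \<subseteq> {..<N}" and "S \<inter> T = {}" and q: "0 \<le> q" "q \<le> 1"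
    and miss: "\<And>i j. i \<in> S \<Longrightarrow> j \<in> T \<Longrightarrow> 1 - edge_prob q q (1 - q) (lab i) (lab j) \<le> c"
  shows "measure_pmf.prob (coins_pmf N q lab) (no_edge_between S T) \<le> c ^ (card S * card T)"
proof -
  define g where "g = (\<lambda>(i::nat, j::nat). (min i j, max i j))"
  define ep where "ep = (\<lambda>(i, j). edge_prob q q (1 - q) (lab i) (lab j))"
  have inj: "inj_on g (S \<times> T)"
    using \<open>S \<inter> T = {}\<close> by (auto simp: inj_on_def g_def min_def max_def split: if_splits)
  have pairs: "g ` (S \<times> T) \<subseteq> {(i, j). i < j \<and> j < N}"
    using S T \<open>S \<inter> T = {}\<close> by (force simp: g_def min_def max_def)
  have sym: "ep (g (i, j)) = ep (i, j)" for i j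
    unfolding ep_def g_def edge_prob_def by (auto simp: min_def max_def split: option.split bool.split)
  have "finite {(i, j). i < j \<and> j < N}"
    by (rule finite_subset[of _ "{..<N} \<times> {..<N}"]) auto
  moreover have "no_edge_between S T = {c. \<forall>e\<in>g ` (S \<times> T). c e \<in> {False}}"
    by (auto simp: no_edge_between_def g_def)
  ultimately have "measure_pmf.prob (coins_pmf N q lab) (no_edge_between S T)
      = (\<Prod>e\<in>g ` (S \<times> T). measure_pmf.prob (bernoulli_pmf (ep e)) {False})"
    unfolding coins_pmf_def using measure_Pi_pmf_all_in[OF _ pairs, where B = "\<lambda>_. {False}"]
    by (simp add: ep_def case_prod_unfold)
  also have "\<dots> = (\<Prod>e\<in>S \<times> T. 1 - ep (g e))"
    by (simp add: prod.reindex[OF inj] measure_pmf_single ep_def edge_prob_bounds[OF q]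
        case_prod_unfold)
  also have "\<dots> = (\<Prod>e\<in>S \<times> T. 1 - ep e)"
    by (intro prod.cong) (auto simp: sym)
  also have "\<dots> \<le> (\<Prod>e\<in>S \<times> T. c)"
    using miss edge_prob_bounds[OF q] by (intro prod_mono) (auto simp: ep_def)
  also have "\<dots> = c ^ (card S * card T)"
    by (simp add: card_cartesian_product)
  finally show ?thesis .
qed

lemma prob_no_edge_to_class_le:
  assumes T: "T \<subseteq> {i. i < N \<and> lab i = x}" and v: "v < N" "lab v \<notin> {None, x}" "x \<noteq> None"
    and q: "0 \<le> q" "q \<le> 1"
  shows "measure_pmf.prob (coins_pmf N q lab) (no_edge_between {v} T) \<le> q ^ card T"
proof -
  obtain a b where ab: "x = Some a" "lab v = Some b" "a \<noteq> b"
    using v by (cases x; cases "lab v") auto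
  have "1 - edge_prob q q (1 - q) (lab v) (lab j) \<le> q" if "j \<in> T" for j
    using that T ab by (cases a; cases b) (auto simp: edge_prob_def)
  moreover have "{v} \<inter> T = {}" "T \<subseteq> {..<N}" using T v by auto
  ultimately show ?thesis
    using prob_no_edge_between_le[of "{v}" N T q lab q] v q by auto
qed

lemma prob_class_cut_le:
  assumes X: "X = {i. i < N \<and> lab i = x}" "x \<noteq> None" and q: "0 \<le> q" "q \<le> 1"
    and S: "S \<subseteq> X" "2 * card S \<le> card X"
  shows "measure_pmf.prob (coins_pmf N q lab) (no_edge_between S (X - S))
           \<le> exp (- q * real (card X) / 2) ^ card S"
proof -
  have "finite X" using X by auto
  then have card_rest: "real (card X) / 2 \<le> real (card (X - S))"
    using S by (simp add: card_Diff_subset finite_subset of_nat_diff)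
  have "measure_pmf.prob (coins_pmf N q lab) (no_edge_between S (X - S))
      \<le> (1 - q) ^ (card S * card (X - S))"
    using X S q by (intro prob_no_edge_between_le) (auto simp: edge_prob_def split: option.split bool.split)
  also have "\<dots> \<le> exp (- q * real (card S * card (X - S)))"
    using q by (intro one_minus_power_le_exp)
  also have "\<dots> \<le> exp (- q * real (card X) / 2 * real (card S))"
    using mult_left_mono[OF card_rest, of "q * card S"] q by (simp add: algebra_simps)
  also have "\<dots> = exp (- q * real (card X) / 2) ^ card S"
    by (simp add: exp_of_nat_mult[symmetric] mult.commute)
  finally show ?thesis .
qed

lemma prob_some_class_cut_le:
  assumes X: "X = {i. i < N \<and> lab i = x}" "x \<noteq> None" and q: "0 \<le> q" "q \<le> 1"
  shows "measure_pmf.prob (coins_pmf N q lab)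
      (\<Union>S\<in>{S. S \<subseteq> X \<and> S \<noteq> {} \<and> 2 * card S \<le> card X}. no_edge_between S (X - S))
    \<le> exp (real (card X) * exp (- q * real (card X) / 2)) - 1"
proof -
  define y where "y = exp (- q * real (card X) / 2)"
  have "finite X" using X by auto
  have "measure_pmf.prob (coins_pmf N q lab)
      (\<Union>S\<in>{S. S \<subseteq> X \<and> S \<noteq> {} \<and> 2 * card S \<le> card X}. no_edge_between S (X - S))
    \<le> (\<Sum>S\<in>{S. S \<subseteq> X \<and> S \<noteq> {} \<and> 2 * card S \<le> card X}.
         measure_pmf.prob (coins_pmf N q lab) (no_edge_between S (X - S)))"
    using \<open>finite X\<close> by (intro measure_pmf.finite_measure_subadditive_finite) auto
  also have "\<dots> \<le> (\<Sum>S\<in>{S. S \<subseteq> X \<and> S \<noteq> {} \<and> 2 * card S \<le> card X}. y ^ card S)"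
    unfolding y_def by (intro sum_mono prob_class_cut_le[OF X q]) auto
  also have "\<dots> \<le> (\<Sum>S\<in>Pow X - {{}}. y ^ card S)"
    using \<open>finite X\<close> by (intro sum_mono2) (auto simp: y_def)
  also have "\<dots> = (1 + y) ^ card X - 1"
    using \<open>finite X\<close> by (simp add: sum_diff1 sum_power_card_Pow)
  also have "\<dots> \<le> exp y ^ card X - 1"
    using exp_ge_add_one_self[of y] by (simp add: y_def power_mono add.commute)
  finally show ?thesis
    by (simp add: y_def exp_of_nat_mult)
qed

lemma not_connected_subset_class_cuts:
  assumes X: "X = {i. i < N \<and> lab i = x}" "x \<noteq> None" "X \<noteq> {}"
  shows "{c. \<not> graph_connected (graph_of N lab c)}
    \<subseteq> (\<Union>S\<in>{S. S \<subseteq> X \<and> S \<noteq> {} \<and> 2 * card S \<le> card X}. no_edge_between S (X - S))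
      \<union> (\<Union>v\<in>{v. v < N \<and> lab v \<notin> {None, x}}. no_edge_between {v} X)"
    (is "_ \<subseteq> ?cuts \<union> ?detached")
proof (intro subsetI, rule ccontr)
  fix c assume c: "c \<in> {c. \<not> graph_connected (graph_of N lab c)}" and crossed: "c \<notin> ?cuts \<union> ?detached"
  have "graph_connected (graph_of N lab c)"
  proof (rule graph_connected_if_class_cuts_crossed[of X])
    show "finite X" "X \<subseteq> fst (graph_of N lab c)" "X \<noteq> {}" using X by auto
  next
    fix S assume "S \<subseteq> X" "S \<noteq> {}" "2 * card S \<le> card X"
    then have "c \<notin> no_edge_between S (X - S)" using crossed by auto
    then obtain i j where "i \<in> S" "j \<in> X - S" "c (min i j, max i j)"
      by (auto simp: no_edge_between_def)
    then show "\<exists>i\<in>S. \<exists>j\<in>X - S. (i, j) \<in> adjacency (graph_of N lab c)"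
      using \<open>S \<subseteq> X\<close> X by (force intro!: adjacency_graph_of)
  next
    fix v assume v: "v \<in> fst (graph_of N lab c) - X"
    then have "c \<notin> no_edge_between {v} X" using crossed X by auto
    then obtain j where "j \<in> X" "c (min v j, max v j)" by (auto simp: no_edge_between_def)
    then show "\<exists>j\<in>X. (v, j) \<in> adjacency (graph_of N lab c)"
      using v X by (force intro!: adjacency_graph_of)
  qed
  then show False using c by simp
qed

lemma prob_disconnected_given_class_le:
  assumes x: "x \<noteq> None" and q: "0 \<le> q" "q \<le> 1/2"
    and m: "1 \<le> m" "m \<le> card {i. i < N \<and> lab i = x}" and t: "t \<le> q * real m"
  shows "measure_pmf.prob (coins_pmf N q lab) {c. \<not> graph_connected (graph_of N lab c)}
           \<le> (exp (real N * exp (- t / 2)) - 1) + real N * exp (- t)"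
proof -
  define X where "X = {i. i < N \<and> lab i = x}"
  define cuts where "cuts = {S. S \<subseteq> X \<and> S \<noteq> {} \<and> 2 * card S \<le> card X}"
  define W where "W = {v. v < N \<and> lab v \<notin> {None, x}}"
  let ?P = "measure_pmf.prob (coins_pmf N q lab)"
  have "X \<noteq> {}" using m by (auto simp: X_def[symmetric])
  have "card X \<le> N" by (auto simp: X_def intro: card_mono[of "{..<N}", simplified])
  have "q * real m \<le> q * real (card X)"
    using m q by (intro mult_left_mono) (auto simp: X_def)
  with t have tX: "t \<le> q * real (card X)" by linarith
  have "?P {c. \<not> graph_connected (graph_of N lab c)}
      \<le> ?P (\<Union>S\<in>cuts. no_edge_between S (X - S)) + ?P (\<Union>v\<in>W. no_edge_between {v} X)"
    unfolding cuts_def W_def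
    by (intro measure_pmf_prob_le_Un not_connected_subset_class_cuts X_def x \<open>X \<noteq> {}\<close>)
  also have "?P (\<Union>S\<in>cuts. no_edge_between S (X - S)) \<le> exp (real N * exp (- t / 2)) - 1"
  proof -
    have "real (card X) * exp (- q * real (card X) / 2) \<le> real N * exp (- t / 2)"
      using tX \<open>card X \<le> N\<close> by (intro mult_mono) auto
    then have "exp (real (card X) * exp (- q * real (card X) / 2)) - 1 \<le> exp (real N * exp (- t / 2)) - 1"
      by simp
    then show ?thesis
      using prob_some_class_cut_le[OF X_def x q(1)] q unfolding cuts_def by linarith
  qed
  also have "?P (\<Union>v\<in>W. no_edge_between {v} X) \<le> (\<Sum>v\<in>W. ?P (no_edge_between {v} X))"
    by (intro measure_pmf.finite_measure_subadditive_finite) (auto simp: W_def)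
  also have "\<dots> \<le> (\<Sum>v\<in>W. exp (- t))"
  proof (intro sum_mono)
    fix v assume "v \<in> W"
    then have "?P (no_edge_between {v} X) \<le> q ^ card X"
      using q x by (intro prob_no_edge_to_class_le) (auto simp: W_def X_def)
    also have "\<dots> \<le> exp (- q) ^ card X"
      using q exp_ge_add_one_self[of "- q"] by (intro power_mono) auto
    also have "\<dots> \<le> exp (- t)"
      using tX by (simp add: exp_of_nat_mult[symmetric] mult.commute)
    finally show "?P (no_edge_between {v} X) \<le> exp (- t)" .
  qed
  also have "\<dots> \<le> real N * exp (- t)"
    using card_mono[of "{..<N}" W] by (auto simp: W_def intro!: mult_right_mono)
  finally show ?thesis by simp
qed

lemma prob_not_majority_adjacent_le:
  assumes B: "B = {i. i < N \<and> lab i = y}" "y \<noteq> None" and a: "a < N" "lab a \<notin> {None, y}"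
    and q: "0 \<le> q" "q \<le> 1"
  shows "measure_pmf.prob (coins_pmf N q lab)
      (\<Union>T\<in>{T. T \<subseteq> B \<and> card B \<le> 2 * card T}. no_edge_between {a} T) \<le> (2 * sqrt q) ^ card B"
proof -
  let ?P = "measure_pmf.prob (coins_pmf N q lab)"
  have "finite B" using B by auto
  have "?P (\<Union>T\<in>{T. T \<subseteq> B \<and> card B \<le> 2 * card T}. no_edge_between {a} T)
      \<le> (\<Sum>T\<in>{T. T \<subseteq> B \<and> card B \<le> 2 * card T}. ?P (no_edge_between {a} T))"
    using \<open>finite B\<close> by (intro measure_pmf.finite_measure_subadditive_finite) auto
  also have "\<dots> \<le> (\<Sum>T\<in>{T. T \<subseteq> B \<and> card B \<le> 2 * card T}. sqrt q ^ card B)"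
  proof (intro sum_mono)
    fix T assume T: "T \<in> {T. T \<subseteq> B \<and> card B \<le> 2 * card T}"
    then have "?P (no_edge_between {a} T) \<le> q ^ card T"
      using B a q by (intro prob_no_edge_to_class_le) auto
    also have "\<dots> = sqrt q ^ (2 * card T)"
      using q by (simp add: power_mult)
    also have "\<dots> \<le> sqrt q ^ card B"
      using T q by (intro power_decreasing) auto
    finally show "?P (no_edge_between {a} T) \<le> sqrt q ^ card B" .
  qed
  also have "\<dots> \<le> (\<Sum>T\<in>Pow B. sqrt q ^ card B)"
    using \<open>finite B\<close> q by (intro sum_mono2) auto
  also have "\<dots> = (2 * sqrt q) ^ card B"
    using \<open>finite B\<close> by (simp add: card_Pow power_mult_distrib)
  finally show ?thesis .
qed

lemma not_connected_subset_majority_fails: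
  assumes A: "A = {i. i < N \<and> lab i = Some True}" "A \<noteq> {}" and B: "B = {i. i < N \<and> lab i = Some False}"
  shows "{c. \<not> graph_connected (graph_of N lab c)}
    \<subseteq> (\<Union>a\<in>A. \<Union>T\<in>{T. T \<subseteq> B \<and> card B \<le> 2 * card T}. no_edge_between {a} T)
      \<union> (\<Union>b\<in>B. no_edge_between {b} A)"
    (is "_ \<subseteq> ?lonely \<union> ?detached")
proof (intro subsetI, rule ccontr)
  fix c assume c: "c \<in> {c. \<not> graph_connected (graph_of N lab c)}" and adjacent: "c \<notin> ?lonely \<union> ?detached"
  let ?adj = "adjacency (graph_of N lab c)"
  have "graph_connected (graph_of N lab c)"
  proof (rule graph_connected_if_majority_adjacent[of A _ B])
    show "A \<noteq> {}" "A \<subseteq> fst (graph_of N lab c)" "finite B" using A B by auto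
  next
    fix a assume a: "a \<in> A"
    show "2 * card {b\<in>B. (a, b) \<notin> ?adj} < card B"
    proof (rule ccontr)
      assume "\<not> 2 * card {b\<in>B. (a, b) \<notin> ?adj} < card B"
      then have "c \<notin> no_edge_between {a} {b\<in>B. (a, b) \<notin> ?adj}" using adjacent a by auto
      then obtain b where "b \<in> B" "(a, b) \<notin> ?adj" "c (min a b, max a b)"
        by (auto simp: no_edge_between_def)
      then show False using a A B by (force intro: adjacency_graph_of)
    qed
  next
    fix v assume v: "v \<in> fst (graph_of N lab c) - A"
    then have "c \<notin> no_edge_between {v} A" using adjacent A B by auto
    then obtain a where "a \<in> A" "c (min v a, max v a)" by (auto simp: no_edge_between_def)
    then show "\<exists>a\<in>A. (v, a) \<in> ?adj" using v A by (force intro!: adjacency_graph_of)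
  qed
  then show False using c by simp
qed

lemma prob_disconnected_given_two_classes_le:
  assumes q: "0 \<le> q" "q \<le> 1/4" and m: "1 \<le> m"
    "m \<le> card {i. i < N \<and> lab i = Some True}" "m \<le> card {i. i < N \<and> lab i = Some False}"
  shows "measure_pmf.prob (coins_pmf N q lab) {c. \<not> graph_connected (graph_of N lab c)}
           \<le> 2 * real N * (2 * sqrt q) ^ m"
proof -
  define A where "A = {i. i < N \<and> lab i = Some True}"
  define B where "B = {i. i < N \<and> lab i = Some False}"
  let ?P = "measure_pmf.prob (coins_pmf N q lab)"
  have "A \<noteq> {}" using m by (auto simp: A_def[symmetric])
  have "card A \<le> N" "card B \<le> N"
    by (auto simp: A_def B_def intro: card_mono[of "{..<N}", simplified])
  note sq = le_two_sqrt[OF q] two_sqrt_le_1[OF q]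
  have "?P {c. \<not> graph_connected (graph_of N lab c)}
      \<le> ?P (\<Union>a\<in>A. \<Union>T\<in>{T. T \<subseteq> B \<and> card B \<le> 2 * card T}. no_edge_between {a} T)
        + ?P (\<Union>b\<in>B. no_edge_between {b} A)"
    by (intro measure_pmf_prob_le_Un not_connected_subset_majority_fails A_def B_def \<open>A \<noteq> {}\<close>)
  also have "?P (\<Union>a\<in>A. \<Union>T\<in>{T. T \<subseteq> B \<and> card B \<le> 2 * card T}. no_edge_between {a} T)
      \<le> (\<Sum>a\<in>A. ?P (\<Union>T\<in>{T. T \<subseteq> B \<and> card B \<le> 2 * card T}. no_edge_between {a} T))"
    by (intro measure_pmf.finite_measure_subadditive_finite) (auto simp: A_def)
  also have "\<dots> \<le> (\<Sum>a\<in>A. (2 * sqrt q) ^ m)"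
  proof (intro sum_mono order_trans[OF prob_not_majority_adjacent_le[OF B_def]])
    show "(2 * sqrt q) ^ card B \<le> (2 * sqrt q) ^ m"
      using power_decreasing[of m "card B" "2 * sqrt q"] sq q m(3) unfolding B_def by simp
  qed (use q in \<open>auto simp: A_def\<close>)
  also have "?P (\<Union>b\<in>B. no_edge_between {b} A) \<le> (\<Sum>b\<in>B. ?P (no_edge_between {b} A))"
    by (intro measure_pmf.finite_measure_subadditive_finite) (auto simp: B_def)
  also have "\<dots> \<le> (\<Sum>b\<in>B. (2 * sqrt q) ^ m)"
  proof (intro sum_mono order_trans[OF prob_no_edge_to_class_le[OF equalityD1[OF A_def]]])
    have "q ^ card A \<le> q ^ m"
      using power_decreasing[of m "card A" q] q m(2) unfolding A_def by simp
    also have "\<dots> \<le> (2 * sqrt q) ^ m"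
      using sq q by (intro power_mono) auto
    finally show "q ^ card A \<le> (2 * sqrt q) ^ m" .
  qed (use q in \<open>auto simp: B_def\<close>)
  finally have "?P {c. \<not> graph_connected (graph_of N lab c)}
      \<le> (real (card A) + real (card B)) * (2 * sqrt q) ^ m"
    by (simp add: algebra_simps)
  also have "\<dots> \<le> 2 * real N * (2 * sqrt q) ^ m"
    using \<open>card A \<le> N\<close> \<open>card B \<le> N\<close> q by (intro mult_right_mono) auto
  finally show ?thesis .
qed

lemma prob_few_labelled_le:
  assumes "m \<le> N"
  shows "measure_pmf.prob (labels_pmf N pA pB) {lab. card {i. i < N \<and> lab i = x} < m}
           \<le> real (N choose m) * (1 - pmf (label_pmf pA pB) x) ^ (N - m)"
proof -
  define avoiding where "avoiding = (\<lambda>T. {lab :: nat \<Rightarrow> bool option. \<forall>i\<in>T. lab i \<in> - {x}})"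
  define Ts where "Ts = {T. T \<subseteq> {..<N} \<and> card T = N - m}"
  have "finite Ts" by (auto simp: Ts_def intro: finite_subset[of _ "Pow {..<N}"])
  have "card Ts = N choose m"
    using n_subsets[of "{..<N}" "N - m"] assms by (simp add: Ts_def binomial_symmetric[symmetric])
  have "{lab. card {i. i < N \<and> lab i = x} < m} \<subseteq> (\<Union>T\<in>Ts. avoiding T)"
  proof
    fix lab assume "lab \<in> {lab. card {i. i < N \<and> lab i = x} < m}"
    then have "N - m \<le> card ({..<N} - {i. i < N \<and> lab i = x})"
      by (subst card_Diff_subset) auto
    then obtain T where "T \<subseteq> {..<N} - {i. i < N \<and> lab i = x}" "card T = N - m"
      by (meson obtain_subset_with_card_n)
    then show "lab \<in> (\<Union>T\<in>Ts. avoiding T)" by (auto simp: Ts_def avoiding_def)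
  qed
  then have "measure_pmf.prob (labels_pmf N pA pB) {lab. card {i. i < N \<and> lab i = x} < m}
      \<le> measure_pmf.prob (labels_pmf N pA pB) (\<Union>T\<in>Ts. avoiding T)"
    by (intro measure_pmf.finite_measure_mono) auto
  also have "\<dots> \<le> (\<Sum>T\<in>Ts. measure_pmf.prob (labels_pmf N pA pB) (avoiding T))"
    using \<open>finite Ts\<close> by (intro measure_pmf.finite_measure_subadditive_finite) auto
  also have "\<dots> = (\<Sum>T\<in>Ts. (1 - pmf (label_pmf pA pB) x) ^ (N - m))"
  proof (intro sum.cong refl)
    have compl: "measure_pmf.prob (label_pmf pA pB) (- {x}) = 1 - pmf (label_pmf pA pB) x"
      using measure_pmf.prob_compl[of "{x}" "label_pmf pA pB"]
      by (simp add: Compl_eq_Diff_UNIV measure_pmf_single)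
    fix T assume "T \<in> Ts"
    then show "measure_pmf.prob (labels_pmf N pA pB) (avoiding T) = (1 - pmf (label_pmf pA pB) x) ^ (N - m)"
      unfolding labels_pmf_def avoiding_def by (subst measure_Pi_pmf_all_in) (auto simp: compl Ts_def)
  qed
  finally show ?thesis
    using \<open>card Ts = N choose m\<close> by simp
qed

lemma prob_Hq_empty_le:
  "measure_pmf.prob (Hq N pA pB q) {G. \<not> graph_nonempty G} \<le> pmf (label_pmf pA pB) None ^ N"
proof -
  have "measure_pmf.prob (Hq N pA pB q) {G. \<not> graph_nonempty G}
      \<le> measure_pmf.prob (labels_pmf N pA pB) {lab. \<forall>i\<in>{..<N}. lab i \<in> {None}} + 0"
    by (rule prob_Hq_le) (auto simp: graph_nonempty_def)
  also have "\<dots> = pmf (label_pmf pA pB) None ^ N"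
    unfolding labels_pmf_def by (subst measure_Pi_pmf_all_in) (auto simp: measure_pmf_single)
  finally show ?thesis .
qed

lemma prob_Hq_disconnected_one_class_le:
  assumes x: "x \<noteq> None" and q: "0 \<le> q" "q \<le> 1/2" and m: "1 \<le> m" "m \<le> N"
    and t: "t \<le> q * real m"
  shows "measure_pmf.prob (Hq N pA pB q) {G. \<not> graph_connected G}
    \<le> real (N choose m) * (1 - pmf (label_pmf pA pB) x) ^ (N - m)
       + ((exp (real N * exp (- t / 2)) - 1) + real N * exp (- t))"
proof -
  have "measure_pmf.prob (Hq N pA pB q) {G. \<not> graph_connected G}
    \<le> measure_pmf.prob (labels_pmf N pA pB) {lab. card {i. i < N \<and> lab i = x} < m}
       + ((exp (real N * exp (- t / 2)) - 1) + real N * exp (- t))"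
    using prob_disconnected_given_class_le[OF x q m(1) _ t] by (intro prob_Hq_le) (auto simp: not_less)
  then show ?thesis
    using prob_few_labelled_le[OF m(2), of pA pB x] by linarith
qed

lemma prob_Hq_disconnected_two_classes_le:
  assumes q: "0 \<le> q" "q \<le> 1/4" and m: "1 \<le> m" "m \<le> N"
  shows "measure_pmf.prob (Hq N pA pB q) {G. \<not> graph_connected G}
    \<le> real (N choose m) * (1 - pmf (label_pmf pA pB) (Some True)) ^ (N - m)
       + real (N choose m) * (1 - pmf (label_pmf pA pB) (Some False)) ^ (N - m)
       + 2 * real N * (2 * sqrt q) ^ m"
proof -
  let ?few = "\<lambda>y. {lab. card {i. i < N \<and> lab i = y} < m}"
  let ?P = "measure_pmf.prob (labels_pmf N pA pB)"
  have "measure_pmf.prob (Hq N pA pB q) {G. \<not> graph_connected G}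
      \<le> ?P (?few (Some True) \<union> ?few (Some False)) + 2 * real N * (2 * sqrt q) ^ m"
    using prob_disconnected_given_two_classes_le[OF q m(1)] q by (intro prob_Hq_le) (auto simp: not_less)
  moreover have "?P (?few (Some True) \<union> ?few (Some False)) \<le> ?P (?few (Some True)) + ?P (?few (Some False))"
    by (rule measure_Un_le) auto
  ultimately show ?thesis
    using prob_few_labelled_le[OF m(2), of pA pB "Some True"] prob_few_labelled_le[OF m(2), of pA pB "Some False"]
    by linarith
qed

section \<open>Superpolynomially small failure probabilities\<close>

definition negligible :: "(nat \<Rightarrow> real) \<Rightarrow> bool" where
  "negligible f \<longleftrightarrow> (\<forall>C>0. \<forall>\<^sub>F n in sequentially. f n \<le> real n powr (- C))"

lemma negligible_add:
  assumes "negligible f" "negligible g"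
  shows "negligible (\<lambda>n. f n + g n)"
  unfolding negligible_def
proof (intro allI impI)
  fix C :: real assume "0 < C"
  then have "0 < C + 1" by simp
  then have "\<forall>\<^sub>F n in sequentially. f n \<le> real n powr (- (C + 1))"
    "\<forall>\<^sub>F n in sequentially. g n \<le> real n powr (- (C + 1))"
    using assms unfolding negligible_def by blast+
  moreover have "\<forall>\<^sub>F n in sequentially. 2 * real n powr (- (C + 1)) \<le> real n powr (- C)"
    by real_asymp
  ultimately show "\<forall>\<^sub>F n in sequentially. f n + g n \<le> real n powr (- C)"
    by eventually_elim linarith
qed

lemma negligible_le:
  assumes "negligible g" and "\<forall>\<^sub>F n in sequentially. f n \<le> g n"
  shows "negligible f"
  unfolding negligible_def
proof (intro allI impI)
  fix C :: real assume "0 < C"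
  with assms(1) have "\<forall>\<^sub>F n in sequentially. g n \<le> real n powr (- C)"
    by (simp add: negligible_def)
  with assms(2) show "\<forall>\<^sub>F n in sequentially. f n \<le> real n powr (- C)"
    by eventually_elim linarith
qed

lemma overwhelming_if_negligible_failure:
  assumes "negligible (\<lambda>n. measure_pmf.prob (M n) {x. \<not> P x})"
  shows "overwhelming (\<lambda>n. measure_pmf.prob (M n) {x. P x})"
  unfolding overwhelming_def measure_pmf_prob_not[of _ P]
proof (intro allI impI)
  fix C :: real assume "0 < C"
  with assms have "\<forall>\<^sub>F n in sequentially. measure_pmf.prob (M n) {x. \<not> P x} \<le> real n powr (- C)"
    by (simp add: negligible_def)
  then show "\<forall>\<^sub>F n in sequentially. 1 - real n powr (- C) \<le> 1 - measure_pmf.prob (M n) {x. \<not> P x}"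
    by eventually_elim linarith
qed

lemma negligible_binomial_tail:
  assumes g: "0 < g" "g < e" "e \<le> 1"
    and ev: "\<forall>\<^sub>F n in sequentially.
               real (m n) \<le> real n powr g + 1 \<and> real n powr (e - 1) / 2 \<le> p n \<and> p n \<le> 1"
  shows "negligible (\<lambda>n. real (n - K choose m n) * (1 - p n) ^ (n - K - m n))"
proof (rule negligible_le)
  show "negligible (\<lambda>n. exp ((real n powr g + 1) * ln (real n) - real n powr e / 8))"
    unfolding negligible_def
  proof (intro allI impI)
    fix C :: real assume "0 < C"
    show "\<forall>\<^sub>F n in sequentially. exp ((real n powr g + 1) * ln (real n) - real n powr e / 8) \<le> real n powr (- C)"
      using g by real_asymp
  qed
  have "\<forall>\<^sub>F n in sequentially. real K + real n / 4 + (real n powr g + 1) \<le> real n"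
    using g by real_asymp
  with ev eventually_ge_at_top[of 1]
  show "\<forall>\<^sub>F n in sequentially. real (n - K choose m n) * (1 - p n) ^ (n - K - m n)
      \<le> exp ((real n powr g + 1) * ln (real n) - real n powr e / 8)"
  proof eventually_elim
    case (elim n)
    have "0 \<le> real n / 4" "0 \<le> real n powr g" by simp_all
    then have "real K \<le> real n" using elim(3) by linarith
    then have "real (n - K) = real n - real K" by (simp add: of_nat_diff)
    then have "real n / 4 \<le> real (n - K) - real (m n)" using elim(1,3) by linarith
    then show ?case
      using elim(1,2) by (intro binomial_tail_le_exp) auto
  qed
qed

lemma overwhelming_nonempty:
  assumes b: "0 < b" "b \<le> 1"
    and ev: "\<forall>\<^sub>F n in sequentially. real n powr (b - 1) / 2 \<le> 1 - pmf (label_pmf (pA n) (pB n)) None"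
  shows "overwhelming (\<lambda>n. measure_pmf.prob (Hq (n - K) (pA n) (pB n) (q n)) {G. graph_nonempty G})"
proof (rule overwhelming_if_negligible_failure, rule negligible_le)
  show "negligible (\<lambda>n. real (n - K choose 0) * (1 - (1 - pmf (label_pmf (pA n) (pB n)) None)) ^ (n - K - 0))"
    using ev b by (intro negligible_binomial_tail[of "b / 2" b]) (auto elim!: eventually_mono)
  show "\<forall>\<^sub>F n in sequentially. measure_pmf.prob (Hq (n - K) (pA n) (pB n) (q n)) {G. \<not> graph_nonempty G}
      \<le> real (n - K choose 0) * (1 - (1 - pmf (label_pmf (pA n) (pB n)) None)) ^ (n - K - 0)"
    by (intro always_eventually allI) (simp add: prob_Hq_empty_le)
qed

lemma eventually_prob_Hq_disconnected_one_class_le: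
  assumes \<alpha>: "0 < \<alpha>" "\<alpha> < g" "g < 1" and x: "x \<noteq> None"
  shows "\<forall>\<^sub>F n in sequentially.
    measure_pmf.prob (Hq (n - K) (pA n) (pB n) (real n powr (- \<alpha>))) {G. \<not> graph_connected G}
    \<le> real (n - K choose nat \<lceil>real n powr g\<rceil>) * (1 - pmf (label_pmf (pA n) (pB n)) x) ^ (n - K - nat \<lceil>real n powr g\<rceil>)
       + ((exp (real n * exp (- (real n powr (g - \<alpha>)) / 2)) - 1) + real n * exp (- (real n powr (g - \<alpha>))))"
proof -
  have "\<forall>\<^sub>F n in sequentially. real n powr (- \<alpha>) \<le> 1/2 \<and> real K + (real n powr g + 1) \<le> real n"
    using \<alpha> by (intro eventually_conj; real_asymp)
  with eventually_ge_at_top[of 1] show ?thesis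
  proof eventually_elim
    case (elim n)
    define m where "m = nat \<lceil>real n powr g\<rceil>"
    have m: "real n powr g \<le> real m" "real m \<le> real n powr g + 1"
      unfolding m_def using real_nat_ceiling_ge real_nat_ceiling_le by auto
    have "1 \<le> real n powr g" using elim \<alpha> by (simp add: ge_one_powr_ge_zero)
    then have "1 \<le> real m" "real (m + K) \<le> real n" using m elim by auto
    then have "1 \<le> m" "m \<le> n - K" by simp_all
    have "real n powr (g - \<alpha>) = real n powr (- \<alpha>) * real n powr g"
      by (simp add: powr_add[symmetric])
    also have "\<dots> \<le> real n powr (- \<alpha>) * real m"
      using m by (intro mult_left_mono) auto
    finally have t: "real n powr (g - \<alpha>) \<le> real n powr (- \<alpha>) * real m" .
    have "real (n - K) \<le> real n" by simp
    then have "(exp (real (n - K) * exp (- (real n powr (g - \<alpha>)) / 2)) - 1) + real (n - K) * exp (- (real n powr (g - \<alpha>)))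
        \<le> (exp (real n * exp (- (real n powr (g - \<alpha>)) / 2)) - 1) + real n * exp (- (real n powr (g - \<alpha>)))"
      by (intro add_mono diff_right_mono mult_right_mono) auto
    moreover have "measure_pmf.prob (Hq (n - K) (pA n) (pB n) (real n powr (- \<alpha>))) {G. \<not> graph_connected G}
        \<le> real (n - K choose m) * (1 - pmf (label_pmf (pA n) (pB n)) x) ^ (n - K - m)
          + ((exp (real (n - K) * exp (- (real n powr (g - \<alpha>)) / 2)) - 1) + real (n - K) * exp (- (real n powr (g - \<alpha>))))"
      using elim \<open>1 \<le> m\<close> \<open>m \<le> n - K\<close> t by (intro prob_Hq_disconnected_one_class_le[OF x]) auto
    ultimately show ?case unfolding m_def by linarith
  qed
qed

lemma overwhelming_connected_one_class:
  assumes \<alpha>: "0 < \<alpha>" "\<alpha> < g" and e: "g < e" "e \<le> 1" and x: "x \<noteq> None"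
    and ev: "\<forall>\<^sub>F n in sequentially. real n powr (e - 1) / 2 \<le> pmf (label_pmf (pA n) (pB n)) x"
  shows "overwhelming (\<lambda>n. measure_pmf.prob (Hq (n - K) (pA n) (pB n) (real n powr (- \<alpha>))) {G. graph_connected G})"
proof (rule overwhelming_if_negligible_failure, rule negligible_le)
  have "negligible (\<lambda>n. real (n - K choose nat \<lceil>real n powr g\<rceil>)
      * (1 - pmf (label_pmf (pA n) (pB n)) x) ^ (n - K - nat \<lceil>real n powr g\<rceil>))"
    using ev \<alpha> e
    by (intro negligible_binomial_tail) (auto simp: real_nat_ceiling_le pmf_le_1 elim!: eventually_mono)
  moreover have "negligible (\<lambda>n. exp (real n * exp (- (real n powr (g - \<alpha>)) / 2)) - 1)"
    "negligible (\<lambda>n. real n * exp (- (real n powr (g - \<alpha>))))"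
    unfolding negligible_def using \<alpha> by (intro allI impI; real_asymp)+
  ultimately show "negligible (\<lambda>n. real (n - K choose nat \<lceil>real n powr g\<rceil>)
      * (1 - pmf (label_pmf (pA n) (pB n)) x) ^ (n - K - nat \<lceil>real n powr g\<rceil>)
      + ((exp (real n * exp (- (real n powr (g - \<alpha>)) / 2)) - 1) + real n * exp (- (real n powr (g - \<alpha>)))))"
    by (intro negligible_add)
qed (use \<alpha> e x in \<open>intro eventually_prob_Hq_disconnected_one_class_le; auto\<close>)

lemma eventually_prob_Hq_disconnected_two_classes_le:
  assumes "0 < \<alpha>" "0 < g" "g < 1"
  shows "\<forall>\<^sub>F n in sequentially.
    measure_pmf.prob (Hq (n - K) (pA n) (pB n) (real n powr (- \<alpha>))) {G. \<not> graph_connected G}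
    \<le> real (n - K choose nat \<lceil>real n powr g\<rceil>)
          * (1 - pmf (label_pmf (pA n) (pB n)) (Some True)) ^ (n - K - nat \<lceil>real n powr g\<rceil>)
       + real (n - K choose nat \<lceil>real n powr g\<rceil>)
          * (1 - pmf (label_pmf (pA n) (pB n)) (Some False)) ^ (n - K - nat \<lceil>real n powr g\<rceil>)
       + 2 * real n * (1/2) powr (real n powr g)"
proof -
  have "\<forall>\<^sub>F n in sequentially. real n powr (- \<alpha>) \<le> 1/16 \<and> real K + (real n powr g + 1) \<le> real n"
    using assms by (intro eventually_conj; real_asymp)
  with eventually_ge_at_top[of 1] show ?thesis
  proof eventually_elim
    case (elim n)
    define m where "m = nat \<lceil>real n powr g\<rceil>"
    define q where "q = real n powr (- \<alpha>)"
    have m: "real n powr g \<le> real m" "real m \<le> real n powr g + 1"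
      unfolding m_def using real_nat_ceiling_ge real_nat_ceiling_le by auto
    have "1 \<le> real n powr g" using elim assms by (simp add: ge_one_powr_ge_zero)
    then have "1 \<le> real m" "real (m + K) \<le> real n" using m elim by auto
    then have "1 \<le> m" "m \<le> n - K" by simp_all
    have "0 \<le> q" "q \<le> 1/16" using elim by (simp_all add: q_def)
    then have "sqrt q \<le> sqrt (1/16)" by (intro real_sqrt_le_mono)
    then have "2 * sqrt q \<le> 1/2" by (simp add: real_sqrt_divide)
    then have "(2 * sqrt q) ^ m \<le> (1/2) ^ m"
      using \<open>0 \<le> q\<close> by (intro power_mono) auto
    also have "\<dots> \<le> (1/2) powr (real n powr g)"
      using m by (simp add: powr_realpow[symmetric] powr_mono')
    finally have "2 * real (n - K) * (2 * sqrt q) ^ m \<le> 2 * real n * (1/2) powr (real n powr g)"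
      using \<open>0 \<le> q\<close> by (intro mult_mono) auto
    moreover have "measure_pmf.prob (Hq (n - K) (pA n) (pB n) q) {G. \<not> graph_connected G}
        \<le> real (n - K choose m) * (1 - pmf (label_pmf (pA n) (pB n)) (Some True)) ^ (n - K - m)
          + real (n - K choose m) * (1 - pmf (label_pmf (pA n) (pB n)) (Some False)) ^ (n - K - m)
          + 2 * real (n - K) * (2 * sqrt q) ^ m"
      using \<open>0 \<le> q\<close> \<open>q \<le> 1/16\<close> \<open>1 \<le> m\<close> \<open>m \<le> n - K\<close>
      by (intro prob_Hq_disconnected_two_classes_le) auto
    ultimately show ?case unfolding m_def q_def by linarith
  qed
qed

lemma overwhelming_connected_two_classes:
  assumes \<alpha>: "0 < \<alpha>" and g: "0 < g" "g < e" "e \<le> 1"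
    and ev: "\<forall>\<^sub>F n in sequentially. real n powr (e - 1) / 2 \<le> pmf (label_pmf (pA n) (pB n)) (Some True)
                                   \<and> real n powr (e - 1) / 2 \<le> pmf (label_pmf (pA n) (pB n)) (Some False)"
  shows "overwhelming (\<lambda>n. measure_pmf.prob (Hq (n - K) (pA n) (pB n) (real n powr (- \<alpha>))) {G. graph_connected G})"
proof (rule overwhelming_if_negligible_failure, rule negligible_le)
  have "negligible (\<lambda>n. real (n - K choose nat \<lceil>real n powr g\<rceil>)
      * (1 - pmf (label_pmf (pA n) (pB n)) y) ^ (n - K - nat \<lceil>real n powr g\<rceil>))"
    if "y = Some True \<or> y = Some False" for y
    using ev g that
    by (intro negligible_binomial_tail) (auto simp: real_nat_ceiling_le pmf_le_1 elim!: eventually_mono)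
  moreover have "negligible (\<lambda>n. 2 * real n * (1/2) powr (real n powr g))"
    unfolding negligible_def using g by (intro allI impI; real_asymp)
  ultimately show "negligible (\<lambda>n. real (n - K choose nat \<lceil>real n powr g\<rceil>)
          * (1 - pmf (label_pmf (pA n) (pB n)) (Some True)) ^ (n - K - nat \<lceil>real n powr g\<rceil>)
       + real (n - K choose nat \<lceil>real n powr g\<rceil>)
          * (1 - pmf (label_pmf (pA n) (pB n)) (Some False)) ^ (n - K - nat \<lceil>real n powr g\<rceil>)
       + 2 * real n * (1/2) powr (real n powr g))"
    by (intro negligible_add) auto
qed (use \<alpha> g in \<open>intro eventually_prob_Hq_disconnected_two_classes_le; auto\<close>)

section \<open>The label probabilities of the lemma\<close>

definition side_prob :: "real \<Rightarrow> nat \<Rightarrow> nat \<Rightarrow> nat \<Rightarrow> real" where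
  "side_prob \<alpha> k l n = real n powr (- (real k * \<alpha>)) * (1 - real n powr (- \<alpha>)) ^ l"

lemma side_prob_eq_power:
  assumes "1 \<le> n"
  shows "side_prob \<alpha> k l n = (real n powr (- \<alpha>)) ^ k * (1 - real n powr (- \<alpha>)) ^ l"
  using assms by (simp add: side_prob_def powr_realpow[symmetric] powr_powr mult.commute)

lemma side_probs_valid:
  assumes "0 \<le> \<alpha>" "1 \<le> k + l" "1 \<le> n"
  shows "0 \<le> side_prob \<alpha> k l n" "side_prob \<alpha> k l n + side_prob \<alpha> l k n \<le> 1"
proof -
  have y: "0 \<le> real n powr (- \<alpha>)" "real n powr (- \<alpha>) \<le> 1"
    using powr_mono[of "- \<alpha>" 0 "real n"] assms by auto
  then show "0 \<le> side_prob \<alpha> k l n"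
    using assms(3) by (simp add: side_prob_eq_power)
  show "side_prob \<alpha> k l n + side_prob \<alpha> l k n \<le> 1"
  proof (cases "1 \<le> k")
    case True
    then show ?thesis
      using power_times_one_minus_power_sum_le_1[OF y True] assms(3) by (simp add: side_prob_eq_power)
  next
    case False
    then have "1 \<le> l" using assms(2) by simp
    then show ?thesis
      using power_times_one_minus_power_sum_le_1[OF y, of l k] assms(3) by (simp add: side_prob_eq_power)
  qed
qed

lemma eventually_side_prob_ge:
  assumes "0 < \<alpha>"
  shows "\<forall>\<^sub>F n in sequentially. \<forall>j\<ge>k. real n powr (- (real j * \<alpha>)) / 2 \<le> side_prob \<alpha> k l n"
proof -
  have "\<forall>\<^sub>F n in sequentially. real l * real n powr (- \<alpha>) \<le> 1/2"
    using assms by real_asymp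
  with eventually_ge_at_top[of 1] show ?thesis
  proof eventually_elim
    case (elim n)
    have "1 / 2 \<le> 1 + real l * (- (real n powr (- \<alpha>)))" using elim by simp
    also have "\<dots> \<le> (1 - real n powr (- \<alpha>)) ^ l"
      using Bernoulli_inequality[of "- (real n powr (- \<alpha>))" l] powr_mono[of "- \<alpha>" 0 "real n"] elim assms
      by simp
    finally have half: "1 / 2 \<le> (1 - real n powr (- \<alpha>)) ^ l" .
    show ?case
    proof (intro allI impI)
      fix j assume "k \<le> j"
      then have "real n powr (- (real j * \<alpha>)) \<le> real n powr (- (real k * \<alpha>))"
        using elim assms by (intro powr_mono) (auto intro: mult_right_mono)
      then have "real n powr (- (real j * \<alpha>)) / 2 \<le> real n powr (- (real k * \<alpha>)) * (1 / 2)"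
        by simp
      also have "\<dots> \<le> side_prob \<alpha> k l n"
        unfolding side_prob_def using half by (intro mult_left_mono) auto
      finally show "real n powr (- (real j * \<alpha>)) / 2 \<le> side_prob \<alpha> k l n" .
    qed
  qed
qed

lemma eventually_pmf_label_side_probs_ge:
  assumes "0 < \<alpha>" "1 \<le> k + l"
  shows "\<forall>\<^sub>F n in sequentially. \<forall>j.
     (k \<le> j \<longrightarrow> real n powr (- (real j * \<alpha>)) / 2
        \<le> pmf (label_pmf (side_prob \<alpha> k l n) (side_prob \<alpha> l k n)) (Some True))
   \<and> (l \<le> j \<longrightarrow> real n powr (- (real j * \<alpha>)) / 2
        \<le> pmf (label_pmf (side_prob \<alpha> k l n) (side_prob \<alpha> l k n)) (Some False))"
  using eventually_ge_at_top[of 1] eventually_side_prob_ge[OF assms(1), of k l]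
    eventually_side_prob_ge[OF assms(1), of l k]
proof eventually_elim
  case (elim n)
  then have "0 \<le> side_prob \<alpha> k l n" "0 \<le> side_prob \<alpha> l k n"
    "side_prob \<alpha> k l n + side_prob \<alpha> l k n \<le> 1"
    using side_probs_valid[of \<alpha> k l n] side_probs_valid[of \<alpha> l k n] assms by auto
  then show ?case using elim by (simp add: pmf_label_pmf)
qed

lemma exists_side_class_pmf_ge:
  assumes "0 < \<alpha>" "1 \<le> k + l" "min k l \<le> j"
  shows "\<exists>x. x \<noteq> None \<and> (\<forall>\<^sub>F n in sequentially.
    real n powr (- (real j * \<alpha>)) / 2 \<le> pmf (label_pmf (side_prob \<alpha> k l n) (side_prob \<alpha> l k n)) x)"
proof (cases "k \<le> j")
  case True
  with eventually_pmf_label_side_probs_ge[OF assms(1,2)] show ?thesis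
    by (intro exI[of _ "Some True"]) (auto elim: eventually_mono)
next
  case False
  with assms(3) have "l \<le> j" by simp
  with eventually_pmf_label_side_probs_ge[OF assms(1,2)] show ?thesis
    by (intro exI[of _ "Some False"]) (auto elim: eventually_mono)
qed

lemma overwhelming_nonempty_side_probs:
  assumes "0 < \<alpha>" "real d * \<alpha> < 1" "k + l = 2 * d + 1"
  shows "overwhelming (\<lambda>n. measure_pmf.prob
    (Hq (n - (2 * d + 1)) (side_prob \<alpha> k l n) (side_prob \<alpha> l k n) (real n powr (- \<alpha>)))
    {G. graph_nonempty G})"
proof -
  have "1 \<le> k + l" "min k l \<le> d" using assms(3) by auto
  then obtain x where "x \<noteq> None" and ev: "\<forall>\<^sub>F n in sequentially. real n powr (- (real d * \<alpha>)) / 2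
      \<le> pmf (label_pmf (side_prob \<alpha> k l n) (side_prob \<alpha> l k n)) x"
    using exists_side_class_pmf_ge[OF assms(1)] by blast
  show ?thesis
  proof (rule overwhelming_nonempty)
    show "0 < 1 - real d * \<alpha>" "1 - real d * \<alpha> \<le> 1" using assms by auto
    show "\<forall>\<^sub>F n in sequentially. real n powr (1 - real d * \<alpha> - 1) / 2
        \<le> 1 - pmf (label_pmf (side_prob \<alpha> k l n) (side_prob \<alpha> l k n)) None"
      using ev
    proof eventually_elim
      case (elim n)
      have "pmf (label_pmf (side_prob \<alpha> k l n) (side_prob \<alpha> l k n)) None
          + pmf (label_pmf (side_prob \<alpha> k l n) (side_prob \<alpha> l k n)) x \<le> 1"
        by (rule pmf_add_pmf_le_1) (use \<open>x \<noteq> None\<close> in auto)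
      moreover have "1 - real d * \<alpha> - 1 = - (real d * \<alpha>)" by simp
      ultimately show ?case using elim by simp
    qed
  qed
qed

lemma overwhelming_connected_side_probs:
  assumes "0 < \<alpha>" "real d * \<alpha> < 1" "k + l = 2 * d" "1 \<le> d"
  shows "overwhelming (\<lambda>n. measure_pmf.prob
    (Hq (n - 2 * d) (side_prob \<alpha> k l n) (side_prob \<alpha> l k n) (real n powr (- \<alpha>)))
    {G. graph_connected G})"
proof (cases "k = l")
  case True
  then have "k = d" "l = d" "1 \<le> k + l" using assms(3,4) by auto
  show ?thesis
  proof (rule overwhelming_connected_two_classes[of \<alpha> "(1 - real d * \<alpha>) / 2" "1 - real d * \<alpha>"])
    show "\<forall>\<^sub>F n in sequentially.
        real n powr (1 - real d * \<alpha> - 1) / 2 \<le> pmf (label_pmf (side_prob \<alpha> k l n) (side_prob \<alpha> l k n)) (Some True)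
      \<and> real n powr (1 - real d * \<alpha> - 1) / 2 \<le> pmf (label_pmf (side_prob \<alpha> k l n) (side_prob \<alpha> l k n)) (Some False)"
      using eventually_pmf_label_side_probs_ge[OF assms(1) \<open>1 \<le> k + l\<close>]
      by eventually_elim (use \<open>k = d\<close> \<open>l = d\<close> in auto)
  qed (use assms in \<open>auto simp: mult.commute\<close>)
next
  case False
  then have "min k l \<le> d - 1" "1 \<le> k + l" using assms(3,4) by auto
  then obtain x where "x \<noteq> None" and ev: "\<forall>\<^sub>F n in sequentially.
      real n powr (- (real (d - 1) * \<alpha>)) / 2 \<le> pmf (label_pmf (side_prob \<alpha> k l n) (side_prob \<alpha> l k n)) x"
    using exists_side_class_pmf_ge[OF assms(1)] by blast
  show ?thesis
  proof (rule overwhelming_connected_one_class[OF assms(1) _ _ _ \<open>x \<noteq> None\<close>])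
    show "\<alpha> < (1 - real d * \<alpha>) / 2 + \<alpha>" using assms(2) by simp
    show "(1 - real d * \<alpha>) / 2 + \<alpha> < 1 - (real d - 1) * \<alpha>"
      using assms(2) by (simp add: field_simps)
    show "1 - (real d - 1) * \<alpha> \<le> 1" using assms(1,4) by simp
    have "real (d - 1) = real d - 1"
      using assms(4) by (simp add: of_nat_diff)
    with ev show "\<forall>\<^sub>F n in sequentially. real n powr (1 - (real d - 1) * \<alpha> - 1) / 2
        \<le> pmf (label_pmf (side_prob \<alpha> k l n) (side_prob \<alpha> l k n)) x"
      by (simp only:) simp
  qed
qed

theorem lemma4p4:
  fixes d k l :: nat and \<alpha> :: real
  assumes "d \<ge> 1" and "0 < \<alpha>" and "\<alpha> < 1 / real d"
  shows "(k + l = 2 * d + 1 \<longrightarrow>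
            overwhelming (\<lambda>n. measure_pmf.prob
              (Hq (n - (2 * d + 1))
                  (real n powr (- (real k * \<alpha>)) * (1 - real n powr (- \<alpha>)) ^ l)
                  (real n powr (- (real l * \<alpha>)) * (1 - real n powr (- \<alpha>)) ^ k)
                  (real n powr (- \<alpha>)))
              {G. graph_nonempty G}))
       \<and> (k + l = 2 * d \<longrightarrow>
            overwhelming (\<lambda>n. measure_pmf.prob
              (Hq (n - 2 * d)
                  (real n powr (- (real k * \<alpha>)) * (1 - real n powr (- \<alpha>)) ^ l)
                  (real n powr (- (real l * \<alpha>)) * (1 - real n powr (- \<alpha>)) ^ k)
                  (real n powr (- \<alpha>)))
              {G. graph_connected G}))"
proof -
  have d\<alpha>: "real d * \<alpha> < 1"
    using assms by (simp add: less_divide_eq mult.commute)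
  show ?thesis
    using overwhelming_nonempty_side_probs[OF assms(2) d\<alpha>, of k l]
      overwhelming_connected_side_probs[OF assms(2) d\<alpha> _ assms(1), of k l]
    unfolding side_prob_def by blast
qed

end
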